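(* Let $0 \le r \le n/2$ be an integer and let $A$ be the adjacency matrix of the subgraph of the Hamming cube $\{0,1\}^n$ induced by the Hamming ball $B(n,r) = \{x : |x| \le r\}$. Then the maximal eigenvalue of $A$ is $\lambda = n - 2x$, where $x$ is the smallest root of the Krawtchouk polynomial $K^{(n)}_{r+1}$. Its multiplicity is $1$, and the corresponding eigenfunction is a positive spherical function on $B(n,r)$ (i.e. its value at a point $y$ depends only on $|y|$).
   Context: The Hamming cube $\{0,1\}^n$ is the graph where two vectors are adjacent iff they differ in exactly one coordinate; $|x|$ is the number of nonzero coordinates of $x$. The Krawtchouk polynomial is $K^{(n)}_k(x)=\sum_{\ell=0}^k(-1)^\ell\binom{x}{\ell}\binom{n-x}{k-\ell}$; its roots are real, distinct and lie in $(0,n)$. *)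

theory Defs
  imports Complex_Main
begin

text \<open>Points of the Hamming cube {0,1}^n are represented by their supports:
  x corresponds to the set {i < n. x_i = 1}, so |x| = card of the set.\<close>

definition hamming_cube :: "nat \<Rightarrow> nat set set" where
  "hamming_cube n = Pow {..<n}"

definition hamming_ball :: "nat \<Rightarrow> nat \<Rightarrow> nat set set" where
  "hamming_ball n r = {x \<in> hamming_cube n. card x \<le> r}"

definition cube_adj :: "nat set \<Rightarrow> nat set \<Rightarrow> real" where
  "cube_adj x y = (if card (sym_diff x y) = 1 then 1 else 0)"

definition adj_apply :: "nat set set \<Rightarrow> (nat set \<Rightarrow> real) \<Rightarrow> nat set \<Rightarrow> real" where
  "adj_apply V f x = (\<Sum>y\<in>V. cube_adj x y * f y)"

definition is_eigenpair :: "nat set set \<Rightarrow> real \<Rightarrow> (nat set \<Rightarrow> real) \<Rightarrow> bool" where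
  "is_eigenpair V mu f \<longleftrightarrow> (\<exists>x\<in>V. f x \<noteq> 0) \<and> (\<forall>x\<in>V. adj_apply V f x = mu * f x)"

definition krawtchouk :: "nat \<Rightarrow> nat \<Rightarrow> real \<Rightarrow> real" where
  "krawtchouk n k t = (\<Sum>l\<le>k. (-1)^l * (t gchoose l) * ((real n - t) gchoose (k - l)))"

end

theory Submission
  imports Defs "HOL-Computational_Algebra.Formal_Power_Series" "HOL-Analysis.Elementary_Metric_Spaces"
begin

(* The Krawtchouk polynomials have the generating function G = (1 - z)^t (1 + z)^(n - t), which
   satisfies (1 - z^2) G' = ((n - 2t) - n z) G; comparing coefficients gives the recurrence
   (k + 1) K_(k+1) = (n - 2t) K_k - (n - k + 1) K_(k-1).
   Let x be the least point at which one of K_0, ..., K_(r+1) vanishes. All of them are nonnegative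
   up to x, and the recurrence forbids two consecutive zeros, so K_0, ..., K_r are positive at x and
   x is the smallest root of K_(r+1).
   With phi_j = K_j(x) / binom(n, j) the recurrence becomes the eigenvalue equation, for n - 2x, of
   the radial function y |-> phi_|y| on B(n, r): a point of weight j has j neighbours of weight j - 1
   and n - j of weight j + 1, and on the boundary sphere the outward term vanishes since
   K_(r+1)(x) = 0. This eigenfunction is positive, so the Perron-Frobenius arguments for a
   nonnegative symmetric matrix apply: every eigenvalue has modulus at most n - 2x and, the ball
   being connected through the empty set, the eigenspace of n - 2x is one-dimensional. *)

unbundle fps_syntax

section \<open>Krawtchouk polynomials\<close>

(* (1 + c z)^a *)
definition binomial_series :: "real \<Rightarrow> real \<Rightarrow> real fps" where
  "binomial_series c a = Abs_fps (\<lambda>k. c ^ k * (a gchoose k))"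

lemma binomial_series_deriv:
  "(1 + fps_const c * fps_X) * fps_deriv (binomial_series c a) = fps_const (c * a) * binomial_series c a"
  (is "?l = ?r")
proof (rule fps_ext)
  fix m
  have "?l $ m = c ^ Suc m * (of_nat m * (a gchoose m) + of_nat (Suc m) * (a gchoose Suc m))"
    by (cases m) (simp_all add: binomial_series_def algebra_simps)
  also have "\<dots> = c ^ Suc m * (a * (a gchoose m))"
    by (simp only: gbinomial_mult_1)
  also have "\<dots> = ?r $ m"
    by (simp add: binomial_series_def)
  finally show "?l $ m = ?r $ m" .
qed

definition krawtchouk_gf :: "nat \<Rightarrow> real \<Rightarrow> real fps" where
  "krawtchouk_gf n t = binomial_series (-1) t * binomial_series 1 (real n - t)"

lemma krawtchouk_gf_nth: "krawtchouk_gf n t $ k = krawtchouk n k t"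
  by (simp add: krawtchouk_gf_def krawtchouk_def binomial_series_def fps_mult_nth atLeast0AtMost)

lemma krawtchouk_gf_ode:
  "(1 - fps_X * fps_X) * fps_deriv (krawtchouk_gf n t) =
     (fps_const (real n - 2 * t) - fps_const (real n) * fps_X) * krawtchouk_gf n t"
proof -
  define A where "A = binomial_series (-1) t"
  define B where "B = binomial_series 1 (real n - t)"
  have dA: "(1 - fps_X) * fps_deriv A = - fps_const t * A"
  proof -
    have "1 + fps_const (-1) * fps_X = (1 - fps_X :: real fps)"
      by (simp add: fps_eq_iff)
    from binomial_series_deriv[of "-1" t, unfolded this] show ?thesis
      by (simp add: A_def)
  qed
  have dB: "(1 + fps_X) * fps_deriv B = fps_const (real n - t) * B"
    using binomial_series_deriv[of 1 "real n - t"] by (simp add: B_def)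
  have "(1 - fps_X * fps_X) * fps_deriv (A * B) =
      (1 + fps_X) * ((1 - fps_X) * fps_deriv A) * B + (1 - fps_X) * A * ((1 + fps_X) * fps_deriv B)"
    by (simp add: algebra_simps)
  also have "\<dots> = (fps_const (real n - 2 * t) - fps_const (real n) * fps_X) * (A * B)"
    unfolding dA dB
    by (simp add: algebra_simps numeral_fps_const
        flip: fps_const_add fps_const_sub fps_const_neg fps_const_mult)
  finally show ?thesis
    by (simp add: krawtchouk_gf_def A_def B_def)
qed

lemma krawtchouk_0 [simp]: "krawtchouk n 0 t = 1"
  by (simp add: krawtchouk_def)

lemma krawtchouk_1: "krawtchouk n 1 t = real n - 2 * t"
  by (simp add: krawtchouk_def)

lemma krawtchouk_Suc_Suc:
  "real (Suc (Suc k)) * krawtchouk n (Suc (Suc k)) t =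
     (real n - 2 * t) * krawtchouk n (Suc k) t - (real n - real k) * krawtchouk n k t"
proof -
  have "((1 - fps_X * fps_X) * fps_deriv (krawtchouk_gf n t)) $ Suc k =
     ((fps_const (real n - 2 * t) - fps_const (real n) * fps_X) * krawtchouk_gf n t) $ Suc k"
    by (simp only: krawtchouk_gf_ode)
  then show ?thesis
    by (simp add: algebra_simps krawtchouk_gf_nth)
qed

lemma krawtchouk_pos_of_neg:
  assumes "t < 0" "k \<le> Suc n"
  shows "krawtchouk n k t > 0"
  unfolding krawtchouk_def
proof (rule sum_pos)
  fix l assume "l \<in> {..k}"
  have "(-1) ^ l * (t gchoose l) = pochhammer (- t) l / fact l"
    by (simp add: gbinomial_pochhammer power_mult_distrib[symmetric])
  also have "\<dots> > 0"
    using assms(1) by (intro divide_pos_pos pochhammer_pos) auto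
  finally have "(-1) ^ l * (t gchoose l) > 0" .
  moreover have "(real n - t) gchoose (k - l) > 0"
    unfolding gbinomial_prod_rev using assms by (intro divide_pos_pos prod_pos) auto
  ultimately show "(-1) ^ l * (t gchoose l) * ((real n - t) gchoose (k - l)) > 0"
    by simp
qed auto

lemma continuous_on_krawtchouk: "continuous_on S (krawtchouk n k)"
  unfolding krawtchouk_def[abs_def] gbinomial_prod_rev
  by (intro continuous_intros) auto

lemma least_zero_of_continuous_family:
  fixes p :: "'k \<Rightarrow> real \<Rightarrow> real"
  assumes "finite K"
    and cont: "\<And>k. k \<in> K \<Longrightarrow> continuous_on UNIV (p k)"
    and pos: "\<And>k t. k \<in> K \<Longrightarrow> t < a \<Longrightarrow> p k t > 0"
    and "k0 \<in> K" "p k0 z = 0"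
  obtains x where "\<exists>k\<in>K. p k x = 0"
    and "\<And>k y. k \<in> K \<Longrightarrow> p k y = 0 \<Longrightarrow> x \<le> y"
    and "\<And>k t. k \<in> K \<Longrightarrow> t \<le> x \<Longrightarrow> p k t \<ge> 0"
proof -
  define Z where "Z = (\<Union>k\<in>K. {t. p k t = 0})"
  have "closed Z"
    unfolding Z_def using \<open>finite K\<close> cont
    by (intro closed_UN ballI closed_Collect_eq continuous_on_const) auto
  moreover have "Z \<noteq> {}"
    using assms(4,5) unfolding Z_def by blast
  moreover have bdd: "bdd_below Z"
    unfolding Z_def by (rule bdd_belowI[of _ a]) (use pos in \<open>force simp: not_less[symmetric]\<close>)
  ultimately have "Inf Z \<in> Z"
    by (rule closed_contains_Inf[rotated 2])
  moreover have least: "Inf Z \<le> y" if "k \<in> K" "p k y = 0" for k y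
    using that bdd by (intro cInf_lower) (auto simp: Z_def)
  moreover have "p k t \<ge> 0" if k: "k \<in> K" and t: "t \<le> Inf Z" for k t
  proof (rule ccontr)
    assume neg: "\<not> p k t \<ge> 0"
    define s where "s = min t a - 1"
    have "p k s > 0" using pos[OF k] by (simp add: s_def)
    then obtain y where y: "y \<le> t" "p k y = 0"
      using IVT2'[of "p k" t 0 s] neg continuous_on_subset[OF cont[OF k]] by (force simp: s_def)
    have "t \<le> y"
      using least[OF k y(2)] t by linarith
    with y neg show False by simp
  qed
  ultimately show ?thesis using that unfolding Z_def by blast
qed

lemma krawtchouk_pos_of_nonneg:
  assumes "m \<le> n" and nonneg: "\<And>k. k \<le> Suc m \<Longrightarrow> krawtchouk n k x \<ge> 0"
  shows "k \<le> m \<Longrightarrow> krawtchouk n k x > 0"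
proof (induction k)
  case (Suc k)
  show ?case
  proof (rule ccontr)
    assume "\<not> krawtchouk n (Suc k) x > 0"
    then have "krawtchouk n (Suc k) x = 0"
      using nonneg[of "Suc k"] Suc.prems by simp
    then have "real (Suc (Suc k)) * krawtchouk n (Suc (Suc k)) x = - ((real n - real k) * krawtchouk n k x)"
      using krawtchouk_Suc_Suc[of k n x] by simp
    also have "\<dots> < 0"
      using Suc assms(1) by simp
    finally show False
      using nonneg[of "Suc (Suc k)"] Suc.prems by (simp add: mult_less_0_iff)
  qed
qed simp

lemma krawtchouk_least_root:
  assumes "r \<le> n"
  obtains x where "krawtchouk n (Suc r) x = 0"
    and "\<And>y. krawtchouk n (Suc r) y = 0 \<Longrightarrow> x \<le> y"
    and "\<And>k. k \<le> r \<Longrightarrow> krawtchouk n k x > 0"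
proof -
  have "1 \<in> {..Suc r}" "krawtchouk n 1 (real n / 2) = 0"
    using krawtchouk_1[of n "real n / 2"] by simp_all
  moreover have "krawtchouk n k t > 0" if "k \<in> {..Suc r}" "t < 0" for k t
    using krawtchouk_pos_of_neg that assms by simp
  ultimately obtain x where zero: "\<exists>k\<in>{..Suc r}. krawtchouk n k x = 0"
    and least: "\<And>k y. k \<in> {..Suc r} \<Longrightarrow> krawtchouk n k y = 0 \<Longrightarrow> x \<le> y"
    and nonneg: "\<And>k t. k \<in> {..Suc r} \<Longrightarrow> t \<le> x \<Longrightarrow> krawtchouk n k t \<ge> 0"
    using least_zero_of_continuous_family[of "{..Suc r}" "krawtchouk n" 0 1 "real n / 2"]
      finite_atMost continuous_on_krawtchouk by blast
  have pos: "\<And>k. k \<le> r \<Longrightarrow> krawtchouk n k x > 0"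
    using krawtchouk_pos_of_nonneg[OF assms] nonneg by simp
  then have "krawtchouk n (Suc r) x = 0"
    using zero by (metis atMost_iff le_SucE less_irrefl)
  with least pos show ?thesis using that by blast
qed


section \<open>A radial eigenfunction on the Hamming ball\<close>

lemma sym_diff_eq_singleton_iff:
  "sym_diff v y = {a} \<longleftrightarrow> (a \<in> v \<and> y = v - {a}) \<or> (a \<notin> v \<and> y = insert a v)"
  (is "?l \<longleftrightarrow> ?r")
proof
  assume ?l
  then have "a \<in> v \<longleftrightarrow> a \<notin> y" and "\<forall>z. z \<noteq> a \<longrightarrow> (z \<in> y \<longleftrightarrow> z \<in> v)"
    by (blast, metis DiffI Un_iff singletonD)
  then show ?r by (cases "a \<in> v") (auto simp: set_eq_iff)
qed auto

lemma adj_apply_cube: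
  assumes V: "V \<subseteq> hamming_cube n" and v: "v \<subseteq> {..<n}"
  shows "adj_apply V f v =
    (\<Sum>a\<in>v. if v - {a} \<in> V then f (v - {a}) else 0) +
    (\<Sum>a\<in>{..<n} - v. if insert a v \<in> V then f (insert a v) else 0)"
proof -
  define D where "D = (\<lambda>a. v - {a}) ` v"
  define U where "U = (\<lambda>a. insert a v) ` ({..<n} - v)"
  have fin: "finite v" "finite V"
    using finite_subset[OF v] finite_subset[OF V] by (simp_all add: hamming_cube_def)
  have nbrs: "{y \<in> V. card (sym_diff v y) = 1} = (D \<union> U) \<inter> V"
    using V unfolding D_def U_def hamming_cube_def
    by (auto simp: card_1_singleton_iff sym_diff_eq_singleton_iff)
  have "adj_apply V f v = (\<Sum>y\<in>{y \<in> V. card (sym_diff v y) = 1}. f y)"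
    unfolding adj_apply_def cube_adj_def using fin by (simp add: sum.inter_filter, intro sum.cong) auto
  also have "\<dots> = (\<Sum>y\<in>(D \<union> U) \<inter> V. f y)"
    by (simp only: nbrs)
  also have "\<dots> = (\<Sum>y\<in>D. if y \<in> V then f y else 0) + (\<Sum>y\<in>U. if y \<in> V then f y else 0)"
  proof -
    have "D \<inter> U = {}"
      unfolding D_def U_def by auto
    then show ?thesis
      using fin by (simp add: sum.inter_restrict D_def U_def sum.union_disjoint)
  qed
  also have "\<dots> = (\<Sum>a\<in>v. if v - {a} \<in> V then f (v - {a}) else 0) +
    (\<Sum>a\<in>{..<n} - v. if insert a v \<in> V then f (insert a v) else 0)"
  proof -
    have "inj_on (\<lambda>a. v - {a}) v" "inj_on (\<lambda>a. insert a v) ({..<n} - v)"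
      by (auto intro!: inj_onI)
    then show ?thesis
      by (simp add: D_def U_def sum.reindex)
  qed
  finally show ?thesis .
qed

lemma finite_hamming_ball: "finite (hamming_ball n r)"
  unfolding hamming_ball_def hamming_cube_def by simp

lemma hamming_ball_subset_closed: "v \<in> hamming_ball n r \<Longrightarrow> w \<subseteq> v \<Longrightarrow> w \<in> hamming_ball n r"
  unfolding hamming_ball_def hamming_cube_def
  by (auto dest: finite_subset[of _ "{..<n}"] intro: le_trans[OF card_mono])

lemma finite_mem_hamming_ball: "v \<in> hamming_ball n r \<Longrightarrow> finite v"
  unfolding hamming_ball_def hamming_cube_def by (auto intro: finite_subset)

lemma adj_apply_ball_radial:
  assumes "v \<in> hamming_ball n r"
  shows "adj_apply (hamming_ball n r) (\<lambda>w. \<phi> (card w)) v =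
    real (card v) * \<phi> (card v - 1) +
    (if card v < r then real (n - card v) * \<phi> (Suc (card v)) else 0)"
proof -
  have v: "v \<subseteq> {..<n}" "card v \<le> r" and "finite v"
    using assms finite_subset unfolding hamming_ball_def hamming_cube_def by auto
  have "hamming_ball n r \<subseteq> hamming_cube n"
    unfolding hamming_ball_def by blast
  moreover have "v - {a} \<in> hamming_ball n r \<and> card (v - {a}) = card v - 1" if "a \<in> v" for a
    using v that \<open>finite v\<close> card_Diff1_le[of v a]
    unfolding hamming_ball_def hamming_cube_def by auto
  moreover have "(insert a v \<in> hamming_ball n r \<longleftrightarrow> card v < r) \<and> card (insert a v) = Suc (card v)"
    if "a \<in> {..<n} - v" for a
    using v that \<open>finite v\<close> unfolding hamming_ball_def hamming_cube_def by auto
  ultimately show ?thesis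
    using v \<open>finite v\<close> by (simp add: adj_apply_cube card_Diff_subset)
qed

lemma real_binomial_absorption:
  "real (Suc k) * real (n choose Suc k) = real (n - k) * real (n choose k)"
proof -
  have "Suc k * (n choose Suc k) = (n - k) * (n choose k)"
    by (simp only: binomial_absorption binomial_absorb_comp)
  then show ?thesis
    by (metis of_nat_mult)
qed

definition radial_krawtchouk :: "nat \<Rightarrow> real \<Rightarrow> nat \<Rightarrow> real" where
  "radial_krawtchouk n t j = krawtchouk n j t / real (n choose j)"

lemma radial_krawtchouk_ball_equation:
  assumes "r \<le> n" and root: "krawtchouk n (Suc r) t = 0" and "j \<le> r"
  shows "real j * radial_krawtchouk n t (j - 1) +
           (if j < r then real (n - j) * radial_krawtchouk n t (Suc j) else 0) =
         (real n - 2 * t) * radial_krawtchouk n t j"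
    (is "?down j + ?up j = _")
proof -
  let ?K = "\<lambda>k. krawtchouk n k t" and ?C = "\<lambda>k. real (n choose k)"
  have up: "?up j * ?C j = real (Suc j) * ?K (Suc j)"
  proof (cases "j < r")
    case True
    then have "?C (Suc j) > 0" using assms(1) by simp
    have "?up j * ?C j = real (n - j) * ?C j * ?K (Suc j) / ?C (Suc j)"
      using True by (simp add: radial_krawtchouk_def)
    also have "\<dots> = real (Suc j) * ?K (Suc j)"
      using \<open>?C (Suc j) > 0\<close> by (simp only: real_binomial_absorption[symmetric]) simp
    finally show ?thesis .
  next
    case False
    then show ?thesis using root \<open>j \<le> r\<close> by simp
  qed
  show ?thesis
  proof (cases j)
    case 0
    then show ?thesis
      using up krawtchouk_1[of n t] by (simp add: radial_krawtchouk_def)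
  next
    case (Suc i)
    have "?C i > 0" using Suc assms(1,3) by simp
    have "?down j * ?C j = real (Suc i) * ?C (Suc i) * ?K i / ?C i"
      using Suc by (simp add: radial_krawtchouk_def)
    also have "\<dots> = (real n - real i) * ?K i"
      using \<open>?C i > 0\<close> Suc assms(1,3) by (simp only: real_binomial_absorption) simp
    finally have down: "?down j * ?C j = (real n - real i) * ?K i" .
    have "(?down j + ?up j) * ?C j = (real n - real i) * ?K i + real (Suc j) * ?K (Suc j)"
      by (simp only: distrib_right down up)
    also have "\<dots> = (real n - 2 * t) * ?K j"
      using krawtchouk_Suc_Suc[of i n t] Suc by simp
    finally have "(?down j + ?up j) * ?C j = (real n - 2 * t) * ?K j" .
    then show ?thesis
      using assms(1,3) by (simp add: radial_krawtchouk_def field_simps)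
  qed
qed

lemma radial_krawtchouk_eigenfunction:
  assumes "r \<le> n" "krawtchouk n (Suc r) t = 0" "v \<in> hamming_ball n r"
  shows "adj_apply (hamming_ball n r) (\<lambda>w. radial_krawtchouk n t (card w)) v =
    (real n - 2 * t) * radial_krawtchouk n t (card v)"
proof -
  have "card v \<le> r"
    using assms(3) by (simp add: hamming_ball_def)
  then show ?thesis
    using assms radial_krawtchouk_ball_equation[of r n t "card v"] by (simp add: adj_apply_ball_radial)
qed


section \<open>Perron-Frobenius arguments\<close>

lemma cube_adj_commute: "cube_adj x y = cube_adj y x"
  unfolding cube_adj_def by (simp add: Un_commute)

lemma cube_adj_nonneg: "cube_adj x y \<ge> 0"
  unfolding cube_adj_def by simp

lemma adj_apply_symmetric:
  "(\<Sum>x\<in>V. f x * adj_apply V g x) = (\<Sum>x\<in>V. g x * adj_apply V f x)"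
proof -
  have "(\<Sum>x\<in>V. f x * adj_apply V g x) = (\<Sum>x\<in>V. \<Sum>y\<in>V. f x * cube_adj x y * g y)"
    unfolding adj_apply_def by (simp add: sum_distrib_left mult.assoc)
  also have "\<dots> = (\<Sum>y\<in>V. \<Sum>x\<in>V. f x * cube_adj x y * g y)"
    by (rule sum.swap)
  also have "\<dots> = (\<Sum>x\<in>V. g x * adj_apply V f x)"
    unfolding adj_apply_def sum_distrib_left
    by (intro sum.cong refl) (simp add: cube_adj_commute mult_ac)
  finally show ?thesis .
qed

lemma abs_adj_apply_le: "\<bar>adj_apply V g x\<bar> \<le> adj_apply V (\<lambda>y. \<bar>g y\<bar>) x"
  unfolding adj_apply_def
  by (rule order_trans[OF sum_abs]) (simp add: abs_mult cube_adj_nonneg)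

lemma abs_eigenvalue_le_of_positive_eigenfunction:
  assumes "finite V" and pos: "\<forall>x\<in>V. f x > 0"
    and f: "\<forall>x\<in>V. adj_apply V f x = \<rho> * f x"
    and g: "is_eigenpair V \<mu> g"
  shows "\<bar>\<mu>\<bar> \<le> \<rho>"
proof -
  define S where "S = (\<Sum>x\<in>V. f x * \<bar>g x\<bar>)"
  obtain x0 where "x0 \<in> V" "g x0 \<noteq> 0"
    using g unfolding is_eigenpair_def by blast
  then have "S > 0"
    unfolding S_def using pos \<open>finite V\<close>
    by (intro sum_pos2[of V x0]) (auto intro: less_imp_le)
  have "\<bar>\<mu>\<bar> * S = (\<Sum>x\<in>V. f x * \<bar>adj_apply V g x\<bar>)"
    unfolding S_def using g pos
    by (auto simp: is_eigenpair_def sum_distrib_left abs_mult mult_ac intro!: sum.cong)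
  also have "\<dots> \<le> (\<Sum>x\<in>V. f x * adj_apply V (\<lambda>y. \<bar>g y\<bar>) x)"
    using pos abs_adj_apply_le by (intro sum_mono mult_left_mono) (auto intro: less_imp_le)
  also have "\<dots> = (\<Sum>x\<in>V. \<bar>g x\<bar> * adj_apply V f x)"
    by (rule adj_apply_symmetric)
  also have "\<dots> = \<rho> * S"
    unfolding S_def using f by (simp add: sum_distrib_left mult_ac)
  finally show ?thesis
    using \<open>S > 0\<close> by simp
qed

lemma nonneg_eigenfunction_vanishes_at_neighbour:
  assumes "finite V" and nonneg: "\<forall>x\<in>V. h x \<ge> 0"
    and "adj_apply V h v = \<rho> * h v" "h v = 0"
    and "u \<in> V" "cube_adj v u \<noteq> 0"
  shows "h u = 0"
proof -
  have "(\<Sum>y\<in>V. cube_adj v y * h y) = 0"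
    using assms(3,4) unfolding adj_apply_def by simp
  then have "\<forall>y\<in>V. cube_adj v y * h y = 0"
    using \<open>finite V\<close> nonneg cube_adj_nonneg by (simp add: sum_nonneg_eq_0_iff)
  then show ?thesis
    using assms(5,6) by (metis mult_eq_0_iff)
qed

lemma nonneg_eigenfunction_vanishes_iff_at_empty:
  assumes "finite V" and down_closed: "\<And>v w. v \<in> V \<Longrightarrow> w \<subseteq> v \<Longrightarrow> w \<in> V"
    and nonneg: "\<forall>x\<in>V. h x \<ge> 0" and eigen: "\<forall>x\<in>V. adj_apply V h x = \<rho> * h x"
    and "finite v" "v \<in> V"
  shows "h v = 0 \<longleftrightarrow> h {} = 0"
  using \<open>finite v\<close> \<open>v \<in> V\<close>
proof (induction v rule: finite_induct)
  case (insert a w)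
  have "w \<in> V"
    using down_closed[OF insert.prems] by blast
  have "cube_adj (insert a w) w = 1"
    using insert.hyps by (simp add: cube_adj_def insert_Diff_if)
  then have "h (insert a w) = 0 \<longleftrightarrow> h w = 0"
    using nonneg_eigenfunction_vanishes_at_neighbour[OF \<open>finite V\<close> nonneg]
      eigen insert.prems \<open>w \<in> V\<close> cube_adj_commute by (metis zero_neq_one)
  with insert.IH \<open>w \<in> V\<close> show ?case by blast
qed simp

lemma positive_eigenfunction_simple:
  assumes "finite V" and down_closed: "\<And>v w. v \<in> V \<Longrightarrow> w \<subseteq> v \<Longrightarrow> w \<in> V"
    and "\<And>v. v \<in> V \<Longrightarrow> finite v"
    and pos: "\<forall>x\<in>V. f x > 0" and f: "\<forall>x\<in>V. adj_apply V f x = \<rho> * f x"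
    and g: "is_eigenpair V \<rho> g"
  shows "\<exists>c. \<forall>v\<in>V. g v = c * f v"
proof -
  have "V \<noteq> {}"
    using g unfolding is_eigenpair_def by blast
  then obtain v0 where "v0 \<in> V" and v0_min: "\<And>v. v \<in> V \<Longrightarrow> g v0 / f v0 \<le> g v / f v"
    using ex_is_arg_min_if_finite[OF \<open>finite V\<close>, of "\<lambda>v. g v / f v"]
    by (auto simp: is_arg_min_linorder)
  define c where "c = g v0 / f v0"
  define h where "h v = g v - c * f v" for v
  have nonneg: "\<forall>x\<in>V. h x \<ge> 0"
  proof
    fix x assume "x \<in> V"
    then have "c \<le> g x / f x" "f x > 0"
      using v0_min pos unfolding c_def by auto
    then show "h x \<ge> 0"
      unfolding h_def by (simp add: pos_le_divide_eq)
  qed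
  have eigen: "\<forall>x\<in>V. adj_apply V h x = \<rho> * h x"
  proof
    fix x assume "x \<in> V"
    have "adj_apply V h x = adj_apply V g x - c * adj_apply V f x"
      unfolding adj_apply_def h_def by (simp add: sum_subtractf sum_distrib_left algebra_simps)
    also have "\<dots> = \<rho> * h x"
      using f g \<open>x \<in> V\<close> unfolding is_eigenpair_def by (simp add: h_def algebra_simps)
    finally show "adj_apply V h x = \<rho> * h x" .
  qed
  have vanish_iff: "h v = 0 \<longleftrightarrow> h {} = 0" if "v \<in> V" for v
    using nonneg_eigenfunction_vanishes_iff_at_empty[of V h \<rho> v] assms nonneg eigen that by blast
  have "h v0 = 0"
    using pos \<open>v0 \<in> V\<close> by (simp add: h_def c_def less_imp_neq[symmetric])
  then have "\<forall>v\<in>V. h v = 0"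
    using vanish_iff \<open>v0 \<in> V\<close> by blast
  then show ?thesis
    unfolding h_def by auto
qed


theorem corollary1p8:
  fixes n r :: nat
  assumes "2 * r \<le> n"
  shows "\<exists>x f.
     krawtchouk n (r + 1) x = 0 \<and> (\<forall>y. krawtchouk n (r + 1) y = 0 \<longrightarrow> x \<le> y) \<and>
     is_eigenpair (hamming_ball n r) (real n - 2 * x) f \<and>
     (\<forall>mu g. is_eigenpair (hamming_ball n r) mu g \<longrightarrow> mu \<le> real n - 2 * x) \<and>
     (\<forall>g. is_eigenpair (hamming_ball n r) (real n - 2 * x) g \<longrightarrow>
            (\<exists>c. \<forall>v\<in>hamming_ball n r. g v = c * f v)) \<and>
     (\<forall>v\<in>hamming_ball n r. f v > 0) \<and>
     (\<forall>u\<in>hamming_ball n r. \<forall>v\<in>hamming_ball n r. card u = card v \<longrightarrow> f u = f v)"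
proof -
  let ?V = "hamming_ball n r"
  have "r \<le> n" using assms by simp
  then obtain x where root: "krawtchouk n (Suc r) x = 0"
    and least: "\<And>y. krawtchouk n (Suc r) y = 0 \<Longrightarrow> x \<le> y"
    and pos: "\<And>k. k \<le> r \<Longrightarrow> krawtchouk n k x > 0"
    using krawtchouk_least_root by blast
  define f where "f w = radial_krawtchouk n x (card w)" for w :: "nat set"
  have f_pos: "\<forall>v\<in>?V. f v > 0"
    using pos \<open>r \<le> n\<close> by (auto simp: f_def radial_krawtchouk_def hamming_ball_def)
  have f_eigen: "\<forall>v\<in>?V. adj_apply ?V f v = (real n - 2 * x) * f v"
    using radial_krawtchouk_eigenfunction[OF \<open>r \<le> n\<close> root] by (simp add: f_def[abs_def])
  have "{} \<in> ?V"
    by (simp add: hamming_ball_def hamming_cube_def)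
  then have "is_eigenpair ?V (real n - 2 * x) f"
    using f_pos f_eigen unfolding is_eigenpair_def by force
  moreover have "\<mu> \<le> real n - 2 * x" if "is_eigenpair ?V \<mu> g" for \<mu> g
    using abs_eigenvalue_le_of_positive_eigenfunction[OF finite_hamming_ball f_pos f_eigen that] by simp
  moreover have "\<exists>c. \<forall>v\<in>?V. g v = c * f v" if "is_eigenpair ?V (real n - 2 * x) g" for g
    using positive_eigenfunction_simple[OF finite_hamming_ball hamming_ball_subset_closed
        finite_mem_hamming_ball f_pos f_eigen that] .
  moreover have "\<forall>u\<in>?V. \<forall>v\<in>?V. card u = card v \<longrightarrow> f u = f v"
    by (simp add: f_def)
  ultimately show ?thesis
    using root least f_pos unfolding Suc_eq_plus1[symmetric] by blast
qed

end
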